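(* For integers $k\ge0$ and $n\ge1$, $$P_{n+k}^{(\alpha,\beta,v,k)}(t)=\big(\mathcal C_n^k\big)^{-1}\Big(\frac{d^n}{dt^n}W^{(k+n)}(t)\Big)\big(W^{(k)}(t)\big)^{-1},\qquad t\in(0,1),$$ where $\mathcal C_n^k=(-1)^n(\alpha+\beta+3+2k+n)_n\,\mathrm{diag}\Big(\frac{\kappa_{v,\beta}+2(k+1+n)}{\kappa_{v,\beta}+2(k+1)},\frac{\kappa_{-v,\beta}+2(k+1+n)}{\kappa_{-v,\beta}+2(k+1)}\Big)$.
   Context: Fix real $\alpha,\beta,v$ with $\alpha>-1$, $\beta>-1$, $|\alpha-\beta|<|v|<\alpha+\beta+2$; $\kappa_{\pm v,\pm\beta}=\alpha\pm v\pm\beta$; $(x)_n$ is the Pochhammer symbol. For real parameters $a,b,v$ write $\kappa'_{\pm v,\pm b}=a\pm v\pm b$ and define $$W^{(a,b,v)}(t)=t^a(1-t)^b\begin{pmatrix}\frac{v(\kappa'_{v,b}+2)}{\kappa'_{v,-b}}t^2-(\kappa'_{v,b}+2)t+(a+1) & (a+b+2)t-(a+1)\\ (a+b+2)t-(a+1) & -\frac{v(\kappa'_{-v,b}+2)}{\kappa'_{-v,-b}}t^2-(\kappa'_{-v,b}+2)t+(a+1)\end{pmatrix},\quad t\in(0,1),$$ and $W^{(k)}=W^{(\alpha+k,\beta+k,v)}$ for integers $k\ge0$. Let $(P_n^{(\alpha,\beta,v)})$ be the monic $2\times2$ matrix polynomials orthogonal w.r.t. $\int_0^1PW^{(0)}Q^*dt$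 and $P_n^{(\alpha,\beta,v,k)}=\frac{(n-k)!}{n!}\frac{d^k}{dt^k}P_n^{(\alpha,\beta,v)}$ for $n\ge k$. *)

theory Defs
  imports "HOL-Analysis.Analysis"
begin

type_synonym mat2 = "real^2^2"

definition mat2 :: "real \<Rightarrow> real \<Rightarrow> real \<Rightarrow> real \<Rightarrow> mat2" where
  "mat2 a b c d = vector [vector [a, b], vector [c, d]]"

definition mderiv :: "nat \<Rightarrow> (real \<Rightarrow> mat2) \<Rightarrow> real \<Rightarrow> mat2" where
  "mderiv n F t = (\<chi> i j. (deriv ^^ n) (\<lambda>s. F s $ i $ j) t)"

definition Wt :: "real \<Rightarrow> real \<Rightarrow> real \<Rightarrow> real \<Rightarrow> mat2" where
  "Wt a b v t = (t powr a * (1 - t) powr b) *\<^sub>R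
     mat2 (v * ((a + v + b) + 2) / (a + v - b) * t^2 - ((a + v + b) + 2) * t + (a + 1))
          ((a + b + 2) * t - (a + 1))
          ((a + b + 2) * t - (a + 1))
          (- v * ((a - v + b) + 2) / (a - v - b) * t^2 - ((a - v + b) + 2) * t + (a + 1))"

definition mpoly :: "(nat \<Rightarrow> nat \<Rightarrow> mat2) \<Rightarrow> nat \<Rightarrow> real \<Rightarrow> mat2" where
  "mpoly C n t = (\<Sum>i\<le>n. t ^ i *\<^sub>R C n i)"

definition monic_orth :: "(real \<Rightarrow> mat2) \<Rightarrow> (nat \<Rightarrow> nat \<Rightarrow> mat2) \<Rightarrow> bool" where
  "monic_orth W C \<longleftrightarrow> (\<forall>n. C n n = mat 1) \<and>
     (\<forall>n m. n \<noteq> m \<longrightarrow>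
        ((\<lambda>t. mpoly C n t ** W t ** transpose (mpoly C m t)) has_integral 0) {0..1})"

end

theory Submission
  imports Defs "HOL-Computational_Algebra.Polynomial"
begin

(* Write W^(a,b)(t) = t^a (1-t)^b Q_{a,b}(t) with a quadratic matrix polynomial Q_{a,b}.
   There are explicit matrix polynomials E and G (of degree 2 and 1) with
   W^(a+1,b+1) = E W^(a,b) and (W^(a+1,b+1))' = G W^(a,b); hence
   (X W^(j+1))' = (X' E + X G) W^(j) for every matrix polynomial X. Iterating gives a Rodrigues
   formula (d/dt)^n W^(k+n) = R W^(k) with R a matrix polynomial of degree n whose leading
   coefficient is C_n^k, and since W^(j+1) vanishes at 0 and 1, the same identity lets one move a
   derivative from one side of the pairing int_0^1 Y W^(j) X^T to the other.
   Let D = P_{n+k}^(k) - (C_n^k)^{-1} R, a matrix polynomial of degree < n. Moving the k derivatives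
   off P_{n+k} shows that P_{n+k}^(k) is W^(k)-orthogonal to D, because P_{n+k} is orthogonal to all
   polynomials of lower degree; moving the n derivatives of the Rodrigues formula onto D shows the
   same for R. Hence int_0^1 D W^(k) D^T = 0, and D = 0 because W^(k) is positive definite on (0,1). *)

section \<open>2x2 matrices\<close>

lemma mat2_nth [simp]:
  "mat2 a b c d $ 1 $ 1 = a" "mat2 a b c d $ 1 $ 2 = b"
  "mat2 a b c d $ 2 $ 1 = c" "mat2 a b c d $ 2 $ 2 = d"
  by (simp_all add: mat2_def)

lemma vec2x2_eq_iff:
  "(A::'a^2^2) = B \<longleftrightarrow> A$1$1 = B$1$1 \<and> A$1$2 = B$1$2 \<and> A$2$1 = B$2$1 \<and> A$2$2 = B$2$2"
  by (auto simp: vec_eq_iff forall_2)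

lemma matrix_mult_2x2_nth [simp]:
  "((A::'a::semiring_1^2^2) ** B) $ i $ j = A$i$1 * B$1$j + A$i$2 * B$2$j"
  by (simp add: matrix_matrix_mult_def sum_2)

lemma matrix_add_rdistrib: "((A::'a::semiring_1^'n^'m) + B) ** C = A ** C + B ** C"
  by (simp add: vec_eq_iff matrix_matrix_mult_def sum.distrib distrib_right)

lemma matrix_diff_rdistrib: "((A::'a::ring_1^'n^'m) - B) ** C = A ** C - B ** C"
  by (simp add: vec_eq_iff matrix_matrix_mult_def sum_subtractf left_diff_distrib)

lemma transpose_add: "transpose (A + B) = transpose A + transpose (B::'a::semiring_1^'n^'m)"
  by (simp add: vec_eq_iff transpose_def)

lemma transpose_zero [simp]: "transpose (0::'a::zero^'n^'m) = 0"
  by (simp add: vec_eq_iff transpose_def)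

lemmas matrix_scaleR_simps = matrix_scalar_ac scalar_matrix_assoc[symmetric]

lemma matrix_inv_2x2:
  fixes A :: mat2
  assumes "A$1$1 * A$2$2 - A$1$2 * A$2$1 \<noteq> 0"
  shows "A ** matrix_inv A = mat 1" "matrix_inv A ** A = mat 1"
proof -
  have "invertible A" using assms by (simp add: invertible_det_nz det_2)
  then have "\<exists>B. A ** B = mat 1 \<and> B ** A = mat 1" by (simp add: invertible_def)
  then have "A ** matrix_inv A = mat 1 \<and> matrix_inv A ** A = mat 1"
    unfolding matrix_inv_def by (rule someI_ex)
  then show "A ** matrix_inv A = mat 1" "matrix_inv A ** A = mat 1" by simp_all
qed

lemma quadratic_form_2x2_pos_def:
  fixes p q r x y :: real
  assumes "p > 0" "p * r - q * q > 0"
  shows "x*x*p + 2*x*y*q + y*y*r \<ge> 0"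
    and "x*x*p + 2*x*y*q + y*y*r = 0 \<Longrightarrow> x = 0 \<and> y = 0"
proof -
  have id: "p * (x*x*p + 2*x*y*q + y*y*r) = (p*x + q*y)\<^sup>2 + (p*r - q*q) * y\<^sup>2"
    by (simp add: algebra_simps power2_eq_square)
  have "p * (x*x*p + 2*x*y*q + y*y*r) \<ge> 0"
    unfolding id using assms by (intro add_nonneg_nonneg) auto
  then show "x*x*p + 2*x*y*q + y*y*r \<ge> 0"
    using assms(1) by (simp add: zero_le_mult_iff)
  assume "x*x*p + 2*x*y*q + y*y*r = 0"
  then have "(p*x + q*y)\<^sup>2 + (p*r - q*q) * y\<^sup>2 = 0" unfolding id[symmetric] by simp
  moreover have "(p*r - q*q) * y\<^sup>2 \<ge> 0" using assms by simp
  ultimately have "(p*x + q*y)\<^sup>2 = 0" "(p*r - q*q) * y\<^sup>2 = 0"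
    using add_nonneg_eq_0_iff[OF zero_le_power2] by blast+
  then have "y = 0" "p*x + q*y = 0" using assms(2) by simp_all
  then show "x = 0 \<and> y = 0" using assms(1) by simp
qed

lemma trace_congruence_2x2:
  fixes A D :: mat2
  assumes "A$1$2 = A$2$1" "A$1$1 > 0" "A$1$1 * A$2$2 - A$1$2 * A$2$1 > 0"
  shows "trace (D ** A ** transpose D) \<ge> 0"
    and "trace (D ** A ** transpose D) = 0 \<Longrightarrow> D = 0"
proof -
  define q where "q x y = x*x*A$1$1 + 2*x*y*A$1$2 + y*y*A$2$2" for x y
  have pd: "A$1$1 * A$2$2 - A$1$2 * A$1$2 > 0" using assms(1,3) by simp
  have tr: "trace (D ** A ** transpose D) = q (D$1$1) (D$1$2) + q (D$2$1) (D$2$2)"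
    unfolding q_def trace_def using assms(1) by (simp add: sum_2 transpose_def algebra_simps)
  have q_nonneg: "q x y \<ge> 0" for x y
    unfolding q_def by (rule quadratic_form_2x2_pos_def(1)[OF assms(2) pd])
  have q_eq_0: "x = 0 \<and> y = 0" if "q x y = 0" for x y
    using that unfolding q_def by (rule quadratic_form_2x2_pos_def(2)[OF assms(2) pd])
  show "trace (D ** A ** transpose D) \<ge> 0"
    unfolding tr by (rule add_nonneg_nonneg[OF q_nonneg q_nonneg])
  assume "trace (D ** A ** transpose D) = 0"
  then have "q (D$1$1) (D$1$2) = 0 \<and> q (D$2$1) (D$2$2) = 0"
    unfolding tr by (rule add_nonneg_eq_0_iff[OF q_nonneg q_nonneg, THEN iffD1])
  then have "D$1$1 = 0 \<and> D$1$2 = 0" "D$2$1 = 0 \<and> D$2$2 = 0"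
    by (meson q_eq_0)+
  then show "D = 0" by (simp add: vec2x2_eq_iff)
qed

section \<open>Matrix polynomials\<close>

type_synonym pmat = "real poly^2^2"

definition peval :: "pmat \<Rightarrow> real \<Rightarrow> mat2" where
  "peval X t = (\<chi> i j. poly (X$i$j) t)"

definition pmat_pderiv :: "pmat \<Rightarrow> pmat" where
  "pmat_pderiv X = (\<chi> i j. pderiv (X$i$j))"

definition pmat_const :: "mat2 \<Rightarrow> pmat" where
  "pmat_const M = (\<chi> i j. [:M$i$j:])"

definition pmat_smult :: "real poly \<Rightarrow> pmat \<Rightarrow> pmat" where
  "pmat_smult p X = (\<chi> i j. p * X$i$j)"

definition pmat2 :: "real poly \<Rightarrow> real poly \<Rightarrow> real poly \<Rightarrow> real poly \<Rightarrow> pmat" where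
  "pmat2 a b c d = vector [vector [a, b], vector [c, d]]"

definition pmat_coeff :: "pmat \<Rightarrow> nat \<Rightarrow> mat2" where
  "pmat_coeff X m = (\<chi> i j. coeff (X$i$j) m)"

text \<open>Unlike degree p < m, this includes the zero polynomial, and for m = 0 it means p = 0.\<close>

definition degree_less :: "real poly \<Rightarrow> nat \<Rightarrow> bool" where
  "degree_less p m \<longleftrightarrow> (\<forall>l\<ge>m. coeff p l = 0)"

definition pmat_degree_less :: "pmat \<Rightarrow> nat \<Rightarrow> bool" where
  "pmat_degree_less X m \<longleftrightarrow> (\<forall>i j. degree_less (X$i$j) m)"

definition pmat_of_mpoly :: "(nat \<Rightarrow> nat \<Rightarrow> mat2) \<Rightarrow> nat \<Rightarrow> pmat" where
  "pmat_of_mpoly C m = (\<chi> i j. \<Sum>l\<le>m. monom (C m l $ i $ j) l)"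

lemma pmat2_nth [simp]:
  "pmat2 a b c d $ 1 $ 1 = a" "pmat2 a b c d $ 1 $ 2 = b"
  "pmat2 a b c d $ 2 $ 1 = c" "pmat2 a b c d $ 2 $ 2 = d"
  by (simp_all add: pmat2_def)

lemma peval_nth [simp]: "peval X t $ i $ j = poly (X$i$j) t"
  by (simp add: peval_def)

lemma pmat_pderiv_nth [simp]: "pmat_pderiv X $ i $ j = pderiv (X$i$j)"
  by (simp add: pmat_pderiv_def)

lemma pmat_const_nth [simp]: "pmat_const M $ i $ j = [:M$i$j:]"
  by (simp add: pmat_const_def)

lemma pmat_smult_nth [simp]: "pmat_smult p X $ i $ j = p * X$i$j"
  by (simp add: pmat_smult_def)

lemma pmat_coeff_nth [simp]: "pmat_coeff X m $ i $ j = coeff (X$i$j) m"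
  by (simp add: pmat_coeff_def)

lemma peval_mult: "peval (X ** Y) t = peval X t ** peval Y t"
  by (simp add: vec_eq_iff)

lemma peval_add: "peval (X + Y) t = peval X t + peval Y t"
  by (simp add: vec_eq_iff)

lemma peval_diff: "peval (X - Y) t = peval X t - peval Y t"
  by (simp add: vec_eq_iff)

lemma peval_const [simp]: "peval (pmat_const M) t = M"
  by (simp add: vec_eq_iff)

lemma peval_one [simp]: "peval (mat 1) t = mat 1"
  by (simp add: vec_eq_iff mat_def)

lemma peval_zero [simp]: "peval 0 t = 0"
  by (simp add: vec_eq_iff)

lemma peval_transpose: "peval (transpose X) t = transpose (peval X t)"
  by (simp add: vec_eq_iff transpose_def)

lemma trace_peval: "trace (peval X t) = poly (X$1$1 + X$2$2) t"
  by (simp add: trace_def sum_2)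

lemma peval_smult: "peval (pmat_smult p X) t = poly p t *\<^sub>R peval X t"
  by (simp add: vec2x2_eq_iff)

lemma peval_pmat_of_mpoly: "peval (pmat_of_mpoly C m) t = mpoly C m t"
  by (simp add: vec_eq_iff pmat_of_mpoly_def mpoly_def poly_sum poly_monom mult.commute)

lemma higher_pmat_pderiv_nth: "(pmat_pderiv ^^ k) X $ i $ j = (pderiv ^^ k) (X $ i $ j)"
  by (induction k) simp_all

lemma coeff_pmat_of_mpoly:
  "coeff (pmat_of_mpoly C m $ i $ j) l = (if l \<le> m then C m l $ i $ j else 0)"
  by (simp add: pmat_of_mpoly_def coeff_sum coeff_monom)

lemma coeff_higher_pderiv_fact:
  "coeff ((pderiv ^^ k) p) l = (fact (l + k) / fact l) * coeff (p :: real poly) (l + k)"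
proof (induction k arbitrary: l)
  case (Suc k)
  have "fact (l + Suc k) / fact l = real (Suc l) * (fact (Suc l + k) / (fact (Suc l) :: real))"
    by (simp add: fact_Suc del: of_nat_Suc)
  then show ?case using Suc[of "Suc l"] by (simp add: coeff_pderiv)
qed simp

lemma degree_less_mult:
  assumes "degree_less p m" "degree_less q d"
  shows "degree_less (p * q) (m + d - 1)"
  unfolding degree_less_def
proof (intro allI impI)
  fix l assume l: "l \<ge> m + d - 1"
  have "coeff p i * coeff q (l - i) = 0" if "i \<le> l" for i
  proof (cases "i \<ge> m")
    case True then show ?thesis using assms(1) by (simp add: degree_less_def)
  next
    case False then have "l - i \<ge> d" using l that by linarith
    then show ?thesis using assms(2) by (simp add: degree_less_def)
  qed
  then show "coeff (p * q) l = 0" unfolding coeff_mult by (intro sum.neutral) simp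
qed

lemma degree_less_add: "degree_less p m \<Longrightarrow> degree_less q m \<Longrightarrow> degree_less (p + q) m"
  by (simp add: degree_less_def)

lemma degree_less_mono: "degree_less p m \<Longrightarrow> m \<le> m' \<Longrightarrow> degree_less p m'"
  by (simp add: degree_less_def)

lemma degree_less_pderiv: "degree_less p (Suc m) \<Longrightarrow> degree_less (pderiv p) m"
  by (simp add: degree_less_def coeff_pderiv)

lemma degree_less_0_iff: "degree_less p 0 \<longleftrightarrow> p = 0"
  by (auto simp: degree_less_def poly_eq_iff)

lemma degree_less_const: "degree_less [:a:] 1"
  by (simp add: degree_less_def coeff_eq_0)

lemma higher_pderiv_degree_less: "degree_less p n \<Longrightarrow> (pderiv ^^ n) p = 0"
  by (simp add: poly_eq_iff coeff_higher_pderiv_fact degree_less_def)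

lemma pmat_degree_less_0_iff: "pmat_degree_less X 0 \<longleftrightarrow> X = 0"
  by (simp add: pmat_degree_less_def vec_eq_iff degree_less_0_iff)

lemma higher_pmat_pderiv_degree_less: "pmat_degree_less X n \<Longrightarrow> (pmat_pderiv ^^ n) X = 0"
  by (simp add: vec_eq_iff higher_pmat_pderiv_nth higher_pderiv_degree_less pmat_degree_less_def)

lemma pmat_degree_less_one: "pmat_degree_less (mat 1) 1"
  by (auto simp: pmat_degree_less_def mat_def degree_less_def)

lemma pmat_coeff_one: "pmat_coeff (mat 1) 0 = mat 1"
  by (simp add: vec_eq_iff mat_def)

lemma pmat_degree_less_of_mpoly: "pmat_degree_less (pmat_of_mpoly C m) (Suc m)"
  by (simp add: pmat_degree_less_def degree_less_def coeff_pmat_of_mpoly)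

lemma pmat_coeff_const_mult: "pmat_coeff (pmat_const L ** X) m = L ** pmat_coeff X m"
  by (simp add: vec_eq_iff coeff_add)

lemma pmat_degree_less_const_mult: "pmat_degree_less X m \<Longrightarrow> pmat_degree_less (pmat_const L ** X) m"
  by (simp add: pmat_degree_less_def degree_less_def coeff_add)

lemma pmat_coeff_of_mpoly: "pmat_coeff (pmat_of_mpoly C m) m = C m m"
  by (simp add: vec_eq_iff coeff_pmat_of_mpoly)

lemma pmat_degree_less_Suc_diff:
  assumes "pmat_degree_less X (Suc m)" "pmat_degree_less Y (Suc m)"
    and "pmat_coeff X m = pmat_coeff Y m"
  shows "pmat_degree_less (X - Y) m"
  unfolding pmat_degree_less_def degree_less_def
proof (intro allI impI)
  fix i j l assume "m \<le> l"
  then consider "l = m" | "Suc m \<le> l" by linarith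
  then show "coeff ((X - Y) $ i $ j) l = 0"
  proof cases
    case 1
    then show ?thesis using arg_cong[where f="\<lambda>M. M $ i $ j", OF assms(3)] by simp
  next
    case 2
    then show ?thesis using assms(1,2) by (simp add: pmat_degree_less_def degree_less_def)
  qed
qed

lemma coeff_pderiv_mult_top:
  "degree_less p (Suc m) \<Longrightarrow> coeff (pderiv p * [:c0,c1,c2:]) (Suc m) = c2 * real m * coeff p m"
  "degree_less p (Suc m) \<Longrightarrow> coeff (pderiv p * [:c0,c1:]) (Suc m) = 0"
  "degree_less p (Suc m) \<Longrightarrow> coeff (p * [:c0,c1:]) (Suc m) = c1 * coeff p m"
  "degree_less p (Suc m) \<Longrightarrow> coeff (p * [:c0:]) (Suc m) = 0"
  by (cases m; auto simp: degree_less_def coeff_pderiv)+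

lemma pmat_degree_less_lowering:
  assumes "pmat_degree_less X (Suc m)"
  shows "pmat_degree_less (pmat_pderiv X ** pmat2 [:x0,x1,x2:] [:y0,y1:] [:z0,z1:] [:w0,w1,w2:]
                + X ** pmat2 [:g0,g1:] [:h0:] [:k0:] [:l0,l1:]) (Suc (Suc m))"
proof -
  have X: "degree_less (X$i$j) (Suc m)" for i j using assms by (simp add: pmat_degree_less_def)
  have q3: "degree_less [:a,b,c:] 3" and q2: "degree_less [:a,b:] 2" for a b c
    by (simp_all add: degree_less_def coeff_eq_0 le_less_trans[OF degree_pCons_le])
  have der: "degree_less (pderiv (X$i$j) * e) (Suc (Suc m))" if "degree_less e 3" for i j e
    using degree_less_mult[OF degree_less_pderiv[OF X] that] by simp
  have mul: "degree_less ((X$i$j) * e) (Suc (Suc m))" if "degree_less e 2" for i j e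
    using degree_less_mult[OF X that] by simp
  show ?thesis unfolding pmat_degree_less_def forall_2 vector_add_component matrix_mult_2x2_nth
      pmat_pderiv_nth pmat2_nth
    by (intro conjI degree_less_add der mul q3 q2 degree_less_mono[OF q2, of 3]
        degree_less_mono[OF degree_less_const, of 2]) simp_all
qed

lemma pmat_coeff_lowering:
  assumes "pmat_degree_less X (Suc m)"
  shows "pmat_coeff (pmat_pderiv X ** pmat2 [:x0,x1,x2:] [:y0,y1:] [:z0,z1:] [:w0,w1,w2:]
                + X ** pmat2 [:g0,g1:] [:h0:] [:k0:] [:l0,l1:]) (Suc m)
         = pmat_coeff X m ** mat2 (real m * x2 + g1) 0 0 (real m * w2 + l1)"
proof -
  have X: "degree_less (X$i$j) (Suc m)" for i j using assms by (simp add: pmat_degree_less_def)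
  show ?thesis unfolding vec2x2_eq_iff pmat_coeff_nth vector_add_component matrix_mult_2x2_nth
      pmat_pderiv_nth pmat2_nth mat2_nth coeff_add
    by (simp only: coeff_pderiv_mult_top[OF X]) (simp add: algebra_simps)
qed

section \<open>Entrywise calculus for matrix-valued functions\<close>

definition mat_has_derivative :: "(real \<Rightarrow> mat2) \<Rightarrow> mat2 \<Rightarrow> real \<Rightarrow> bool" where
  "mat_has_derivative F F' t \<longleftrightarrow> (\<forall>i j. ((\<lambda>s. F s $ i $ j) has_real_derivative F' $ i $ j) (at t))"

definition mat_continuous_on :: "real set \<Rightarrow> (real \<Rightarrow> mat2) \<Rightarrow> bool" where
  "mat_continuous_on S F \<longleftrightarrow> (\<forall>i j. continuous_on S (\<lambda>s. F s $ i $ j))"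

definition mat_has_integral :: "(real \<Rightarrow> mat2) \<Rightarrow> mat2 \<Rightarrow> real set \<Rightarrow> bool" where
  "mat_has_integral F I S \<longleftrightarrow> (\<forall>i j. ((\<lambda>s. F s $ i $ j) has_integral I $ i $ j) S)"

lemma mat_has_derivative_mult:
  assumes "mat_has_derivative F F' t" "mat_has_derivative G G' t"
  shows "mat_has_derivative (\<lambda>s. F s ** G s) (F' ** G t + F t ** G') t"
  using assms unfolding mat_has_derivative_def
  by (auto intro!: derivative_eq_intros simp: algebra_simps)

lemma mat_has_derivative_peval: "mat_has_derivative (peval X) (peval (pmat_pderiv X) t) t"
  unfolding mat_has_derivative_def by simp

lemma mat_has_derivative_transpose:
  "mat_has_derivative F F' t \<Longrightarrow> mat_has_derivative (\<lambda>s. transpose (F s)) (transpose F') t"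
  unfolding mat_has_derivative_def by (simp add: transpose_def)

lemma mat_continuous_on_mult:
  "mat_continuous_on S F \<Longrightarrow> mat_continuous_on S G \<Longrightarrow> mat_continuous_on S (\<lambda>s. F s ** G s)"
  unfolding mat_continuous_on_def matrix_mult_2x2_nth
  by (intro allI continuous_on_add continuous_on_mult) auto

lemma mat_continuous_on_peval: "mat_continuous_on S (peval X)"
  unfolding mat_continuous_on_def by (auto intro!: continuous_intros)

lemma mat_continuous_on_transpose:
  "mat_continuous_on S F \<Longrightarrow> mat_continuous_on S (\<lambda>s. transpose (F s))"
  unfolding mat_continuous_on_def by (simp add: transpose_def)

lemma mat_has_integral_cong:
  "mat_has_integral F I S \<Longrightarrow> (\<And>s. s \<in> S \<Longrightarrow> F s = G s) \<Longrightarrow> I = J \<Longrightarrow> mat_has_integral G J S"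
  unfolding mat_has_integral_def using has_integral_eq by (metis (no_types, lifting))

lemma mat_has_integral_zero: "(\<And>s. F s = 0) \<Longrightarrow> mat_has_integral F 0 S"
  unfolding mat_has_integral_def by simp

lemma mat_has_integral_add:
  "mat_has_integral F I S \<Longrightarrow> mat_has_integral G J S \<Longrightarrow> mat_has_integral (\<lambda>s. F s + G s) (I + J) S"
  unfolding mat_has_integral_def by (auto intro!: has_integral_add)

lemma mat_has_integral_diff:
  "mat_has_integral F I S \<Longrightarrow> mat_has_integral G J S \<Longrightarrow> mat_has_integral (\<lambda>s. F s - G s) (I - J) S"
  unfolding mat_has_integral_def by (auto intro!: has_integral_diff)

lemma mat_has_integral_scaleR:
  "mat_has_integral F I S \<Longrightarrow> mat_has_integral (\<lambda>s. c *\<^sub>R F s) (c *\<^sub>R I) S"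
  unfolding mat_has_integral_def by (auto intro!: has_integral_mult_right)

lemma mat_has_integral_mult_right:
  "mat_has_integral F I S \<Longrightarrow> mat_has_integral (\<lambda>s. F s ** M) (I ** M) S"
  unfolding mat_has_integral_def by (auto intro!: has_integral_add has_integral_mult_left)

lemma mat_has_integral_mult_left:
  "mat_has_integral F I S \<Longrightarrow> mat_has_integral (\<lambda>s. M ** F s) (M ** I) S"
  unfolding mat_has_integral_def by (auto intro!: has_integral_add has_integral_mult_right)

lemma mat_has_integral_transpose:
  "mat_has_integral F I S \<Longrightarrow> mat_has_integral (\<lambda>s. transpose (F s)) (transpose I) S"
  unfolding mat_has_integral_def by (simp add: transpose_def)

lemma mat_has_integral_unique: "mat_has_integral F I S \<Longrightarrow> mat_has_integral F J S \<Longrightarrow> I = J"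
  unfolding mat_has_integral_def vec_eq_iff using has_integral_unique by blast

lemma mat_has_integral_trace:
  "mat_has_integral F I S \<Longrightarrow> ((\<lambda>s. trace (F s)) has_integral trace I) S"
  unfolding mat_has_integral_def trace_def sum_2 by (auto intro!: has_integral_add)

lemma mat_has_integral_of_has_integral:
  assumes "(F has_integral I) S" shows "mat_has_integral F I S"
  unfolding mat_has_integral_def
proof (intro allI)
  fix i j :: 2
  have "((\<lambda>x. x $ i) \<circ> F has_integral I $ i) S"
    by (rule has_integral_linear[OF assms bounded_linear_vec_nth])
  then have "((\<lambda>x. x $ j) \<circ> ((\<lambda>x. x $ i) \<circ> F) has_integral I $ i $ j) S"
    by (rule has_integral_linear[OF _ bounded_linear_vec_nth])
  then show "((\<lambda>s. F s $ i $ j) has_integral I $ i $ j) S" by (simp add: o_def)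
qed

lemma mat_has_integral_derivative:
  assumes "mat_continuous_on {0..1} F" "\<And>t. 0 < t \<Longrightarrow> t < 1 \<Longrightarrow> mat_has_derivative F (F' t) t"
  shows "mat_has_integral F' (F 1 - F 0) {0..1}"
  unfolding mat_has_integral_def
proof (intro allI)
  fix i j :: 2
  show "((\<lambda>s. F' s $ i $ j) has_integral (F 1 - F 0) $ i $ j) {0..1}"
  proof (simp, rule fundamental_theorem_of_calculus_interior)
    show "continuous_on {0..1} (\<lambda>s. F s $ i $ j)"
      using assms(1) unfolding mat_continuous_on_def by simp
    fix x :: real assume "x \<in> {0<..<1}"
    then have "((\<lambda>s. F s $ i $ j) has_real_derivative F' x $ i $ j) (at x)"
      using assms(2)[of x] unfolding mat_has_derivative_def by auto
    then show "((\<lambda>s. F s $ i $ j) has_vector_derivative F' x $ i $ j) (at x)"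
      by (simp add: has_real_derivative_iff_has_vector_derivative)
  qed simp
qed

text \<open>Continuity is only assumed in the interior, since s powr a with a < 0 is not
  continuous at 0.\<close>

lemma has_integral_0_nonneg_imp_0:
  fixes f :: "real \<Rightarrow> real"
  assumes int: "(f has_integral 0) {0..1}" and nonneg: "\<And>s. s \<in> {0..1} \<Longrightarrow> 0 \<le> f s"
    and cont: "continuous_on {0<..<1} f" and t: "0 < t" "t < 1"
  shows "f t = 0"
proof -
  define e where "e = min t (1 - t) / 2"
  have e: "e > 0" "0 < t - e" "t + e < 1" using t by (auto simp: e_def min_def field_simps)
  have sub: "{t - e..t + e} \<subseteq> {0..1}" using e by auto
  have "f integrable_on {t - e..t + e}"
    by (rule integrable_subinterval_real[OF has_integral_integrable[OF int] sub])
  then have hi: "(f has_integral integral {t - e..t + e} f) {t - e..t + e}" by auto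
  have "integral {t - e..t + e} f \<le> 0"
    by (rule has_integral_subset_le[OF sub hi int]) (use nonneg in auto)
  moreover have "integral {t - e..t + e} f \<ge> 0"
    by (rule has_integral_nonneg[OF hi]) (use nonneg sub in auto)
  ultimately have "(f has_integral 0) {t - e..t + e}" using hi by simp
  moreover have "continuous_on {t - e..t + e} f"
    by (rule continuous_on_subset[OF cont]) (use e in auto)
  ultimately show "f t = 0"
  proof (intro has_integral_0_cbox_imp_0[of "t - e" "t + e" f t])
    show "0 \<le> f x" if "x \<in> box (t - e) (t + e)" for x
      using that sub nonneg by (auto simp: box_real)
  qed (use e in \<open>simp_all add: cbox_interval box_real\<close>)
qed

section \<open>The weight\<close>

definition weight_poly :: "real \<Rightarrow> real \<Rightarrow> real \<Rightarrow> pmat" where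
  "weight_poly a b v =
     pmat2 [:a + 1, - ((a + v + b) + 2), v * ((a + v + b) + 2) / (a + v - b):] [:- (a + 1), a + b + 2:]
           [:- (a + 1), a + b + 2:] [:a + 1, - ((a - v + b) + 2), - v * ((a - v + b) + 2) / (a - v - b):]"

definition weight_nondegenerate :: "real \<Rightarrow> real \<Rightarrow> real \<Rightarrow> bool" where
  "weight_nondegenerate a b v \<longleftrightarrow>
     v \<noteq> 0 \<and> a + v - b \<noteq> 0 \<and> a - v - b \<noteq> 0 \<and> a + b + 2 + v \<noteq> 0 \<and> a + b + 2 - v \<noteq> 0"

definition weight_admissible :: "real \<Rightarrow> real \<Rightarrow> real \<Rightarrow> bool" where
  "weight_admissible a b v \<longleftrightarrow> a > -1 \<and> b > -1 \<and> \<bar>a - b\<bar> < \<bar>v\<bar> \<and> \<bar>v\<bar> < a + b + 2"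

text \<open>E and G are obtained by solving E Q(a,b) = t(1-t) Q(a+1,b+1) and
  G Q(a,b) = (a+1 - (a+b+2)t) Q(a+1,b+1) + t(1-t) Q'(a+1,b+1) for polynomial E and G, where
  Q = weight_poly; these encode W(a+1,b+1) = E W(a,b) and W(a+1,b+1)' = G W(a,b).\<close>

definition weight_shift_poly :: "real \<Rightarrow> real \<Rightarrow> real \<Rightarrow> pmat" where
  "weight_shift_poly a b v = (let d = a - b; s = a + b + 2; q0 = (v\<^sup>2 - d\<^sup>2) / (v * (s + v) * (s - v));
      r1 = (s + v + 2) / (s + v); r2 = (s - v + 2) / (s - v) in
     pmat2 [:q0, r1, - r1:] [:q0, - 2 * (v - d) / ((s + v) * (s - v)):]
           [:- q0, 2 * (v + d) / ((s + v) * (s - v)):] [:- q0, r2, - r2:])"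

definition weight_deriv_poly :: "real \<Rightarrow> real \<Rightarrow> real \<Rightarrow> pmat" where
  "weight_deriv_poly a b v = (let d = a - b; s = a + b + 2;
      r1 = (s + v + 2) / (s + v); r2 = (s - v + 2) / (s - v) in
     pmat2 [:r1 * ((a + 2) - d / v), - r1 * (s + 2):] [:(s + 2) * (v - d) / (v * (s + v)):]
           [:(s + 2) * (v + d) / (v * (s - v)):] [:r2 * ((a + 2) + d / v), - r2 * (s + 2):])"

lemma Wt_eq_weight_poly: "Wt a b v t = (t powr a * (1 - t) powr b) *\<^sub>R peval (weight_poly a b v) t"
  unfolding Wt_def weight_poly_def by (simp add: vec2x2_eq_iff algebra_simps power2_eq_square)

lemma weight_admissible_shift:
  assumes "weight_admissible a b v" "c \<ge> 0"
  shows "weight_admissible (a + c) (b + c) v"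
  using assms unfolding weight_admissible_def by auto

lemma weight_admissible_nondegenerate:
  "weight_admissible a b v \<Longrightarrow> weight_nondegenerate a b v"
  unfolding weight_admissible_def weight_nondegenerate_def by (auto simp: abs_if split: if_splits)

text \<open>The polynomial identities below are checked coefficientwise after clearing denominators;
  naming the denominators keeps them atomic for field_simps.\<close>

lemma weight_shift_poly_mult:
  assumes "weight_nondegenerate a b v"
  shows "weight_shift_poly a b v ** weight_poly a b v = pmat_smult [:0, 1, -1:] (weight_poly (a + 1) (b + 1) v)"
proof -
  obtain D1 D2 P M where D: "a + v - b = D1" "a - v - b = D2" "a + b + 2 + v = P" "a + b + 2 - v = M"
    by simp
  have D': "a + 1 + v - (b + 1) = D1" "a + 1 - v - (b + 1) = D2" using D by simp_all
  have nz: "v \<noteq> 0" "D1 \<noteq> 0" "D2 \<noteq> 0" "P \<noteq> 0" "M \<noteq> 0"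
    using assms D unfolding weight_nondegenerate_def by auto
  show ?thesis unfolding weight_shift_poly_def weight_poly_def vec2x2_eq_iff Let_def D D'
    apply (simp add: pCons_eq_iff)
    apply (intro conjI)
    apply (simp_all add: field_simps nz)
    apply (intro conjI)?
    apply (unfold D[symmetric])
    apply algebra+
    done
qed

lemma weight_deriv_poly_mult:
  assumes "weight_nondegenerate a b v"
  shows "weight_deriv_poly a b v ** weight_poly a b v =
           pmat_smult [:a + 1, - (a + b + 2):] (weight_poly (a + 1) (b + 1) v)
           + pmat_smult [:0, 1, -1:] (pmat_pderiv (weight_poly (a + 1) (b + 1) v))"
proof -
  obtain D1 D2 P M where D: "a + v - b = D1" "a - v - b = D2" "a + b + 2 + v = P" "a + b + 2 - v = M"
    by simp
  have D': "a + 1 + v - (b + 1) = D1" "a + 1 - v - (b + 1) = D2" using D by simp_all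
  have nz: "v \<noteq> 0" "D1 \<noteq> 0" "D2 \<noteq> 0" "P \<noteq> 0" "M \<noteq> 0"
    using assms D unfolding weight_nondegenerate_def by auto
  show ?thesis unfolding weight_deriv_poly_def weight_poly_def vec2x2_eq_iff Let_def D D'
    apply (simp add: pCons_eq_iff pderiv_pCons)
    apply (intro conjI)
    apply (simp_all add: field_simps nz)
    apply (intro conjI)?
    apply (unfold D[symmetric])
    apply algebra+
    done
qed

lemma det_weight_poly:
  assumes "weight_nondegenerate a b v"
  defines "K \<equiv> - (v * v) * (a + b + 2 + v) * (a + b + 2 - v) / ((a + v - b) * (a - v - b))"
  shows "weight_poly a b v $1$1 * weight_poly a b v $2$2 - weight_poly a b v $1$2 * weight_poly a b v $2$1
           = [:0, 0, K, -2 * K, K:]"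
proof -
  obtain D1 D2 P M where D: "a + v - b = D1" "a - v - b = D2" "a + b + 2 + v = P" "a + b + 2 - v = M"
    by simp
  have nz: "v \<noteq> 0" "D1 \<noteq> 0" "D2 \<noteq> 0" "P \<noteq> 0" "M \<noteq> 0"
    using assms D unfolding weight_nondegenerate_def by auto
  show ?thesis unfolding K_def weight_poly_def D
    apply (simp add: pCons_eq_iff)
    apply (intro conjI)
    apply (simp_all add: field_simps nz)
    apply (intro conjI)?
    apply (unfold D[symmetric])
    apply algebra+
    done
qed

definition lowering_lead :: "real \<Rightarrow> real \<Rightarrow> real \<Rightarrow> nat \<Rightarrow> mat2" where
  "lowering_lead a b v m = mat2 (- (a + b + real m + 4) * (a + b + v + 4) / (a + b + v + 2)) 0
                                0 (- (a + b + real m + 4) * (a + b - v + 4) / (a + b - v + 2))"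

lemma weight_lowering_degree_less:
  "pmat_degree_less X (Suc m) \<Longrightarrow>
     pmat_degree_less (pmat_pderiv X ** weight_shift_poly a b v + X ** weight_deriv_poly a b v) (Suc (Suc m))"
  unfolding weight_shift_poly_def weight_deriv_poly_def Let_def by (rule pmat_degree_less_lowering)

lemma weight_lowering_coeff:
  assumes "weight_nondegenerate a b v" "pmat_degree_less X (Suc m)"
  shows "pmat_coeff (pmat_pderiv X ** weight_shift_poly a b v + X ** weight_deriv_poly a b v) (Suc m)
           = pmat_coeff X m ** lowering_lead a b v m"
proof -
  have "a + b + 2 + v \<noteq> 0" "a + b + 2 - v \<noteq> 0"
    using assms(1) by (simp_all add: weight_nondegenerate_def)
  then have "real m * - ((a + b + 2 + v + 2) / (a + b + 2 + v)) + - ((a + b + 2 + v + 2) / (a + b + 2 + v)) * (a + b + 2 + 2)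
        = - (a + b + real m + 4) * (a + b + v + 4) / (a + b + v + 2)"
    "real m * - ((a + b + 2 - v + 2) / (a + b + 2 - v)) + - ((a + b + 2 - v + 2) / (a + b + 2 - v)) * (a + b + 2 + 2)
        = - (a + b + real m + 4) * (a + b - v + 4) / (a + b - v + 2)"
    by (simp_all add: divide_simps) (simp_all add: algebra_simps)
  then show ?thesis
    unfolding weight_shift_poly_def weight_deriv_poly_def Let_def pmat_coeff_lowering[OF assms(2)]
      lowering_lead_def by (simp only:)
qed

lemma weight_poly_symmetric: "weight_poly a b v $1$2 = weight_poly a b v $2$1"
  by (simp add: weight_poly_def)

lemma Wt_transpose: "transpose (Wt a b v t) = Wt a b v t"
  by (simp add: Wt_def vec2x2_eq_iff transpose_def mat2_def)

lemma Wt_Suc: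
  assumes "weight_nondegenerate a b v" "0 < t" "t < 1"
  shows "Wt (a + 1) (b + 1) v t = peval (weight_shift_poly a b v) t ** Wt a b v t"
proof -
  have "peval (weight_shift_poly a b v) t ** Wt a b v t =
      (t powr a * (1 - t) powr b) *\<^sub>R peval (weight_shift_poly a b v ** weight_poly a b v) t"
    by (simp add: Wt_eq_weight_poly matrix_scaleR_simps peval_mult)
  also have "\<dots> = Wt (a + 1) (b + 1) v t"
    using assms(2,3) unfolding weight_shift_poly_mult[OF assms(1)] peval_smult Wt_eq_weight_poly
    by (simp add: powr_add algebra_simps)
  finally show ?thesis by simp
qed

lemma weight_factor_has_derivative:
  assumes "0 < t" "t < 1"
  shows "((\<lambda>s. s powr (a + 1) * (1 - s) powr (b + 1)) has_real_derivative
           t powr a * (1 - t) powr b * poly [:a + 1, - (a + b + 2):] t) (at t)"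
  using assms by (auto intro!: derivative_eq_intros) (simp add: powr_add algebra_simps)

lemma Wt_Suc_has_derivative:
  assumes "weight_nondegenerate a b v" "0 < t" "t < 1"
  shows "mat_has_derivative (Wt (a + 1) (b + 1) v) (peval (weight_deriv_poly a b v) t ** Wt a b v t) t"
  unfolding mat_has_derivative_def
proof (intro allI)
  fix i j :: 2
  define u where "u s = s powr a * (1 - s) powr b" for s
  define q where "q = weight_poly (a + 1) (b + 1) v $ i $ j"
  have "(peval (weight_deriv_poly a b v) t ** Wt a b v t) $ i $ j
      = u t * peval (weight_deriv_poly a b v ** weight_poly a b v) t $ i $ j"
    by (simp add: Wt_eq_weight_poly u_def matrix_scaleR_simps peval_mult del: peval_nth matrix_mult_2x2_nth)
  also have "\<dots> = u t * poly [:a + 1, - (a + b + 2):] t * poly q t + u t * (t * (1 - t)) * poly (pderiv q) t"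
    unfolding weight_deriv_poly_mult[OF assms(1)] q_def by (simp add: algebra_simps)
  finally have rhs: "(peval (weight_deriv_poly a b v) t ** Wt a b v t) $ i $ j = \<dots>" .
  have "((\<lambda>s. s powr (a + 1) * (1 - s) powr (b + 1) * poly q s) has_real_derivative
      u t * poly [:a + 1, - (a + b + 2):] t * poly q t + t powr (a + 1) * (1 - t) powr (b + 1) * poly (pderiv q) t) (at t)"
    by (rule DERIV_cong[OF DERIV_mult[OF weight_factor_has_derivative[OF assms(2,3)] poly_DERIV]])
      (simp add: u_def)
  moreover have "t powr (a + 1) * (1 - t) powr (b + 1) = u t * (t * (1 - t))"
    using assms(2,3) by (simp add: u_def powr_add)
  ultimately show "((\<lambda>s. Wt (a + 1) (b + 1) v s $ i $ j) has_real_derivative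
      (peval (weight_deriv_poly a b v) t ** Wt a b v t) $ i $ j) (at t)"
    unfolding rhs by (simp add: Wt_eq_weight_poly q_def)
qed

lemma weight_deriv_poly_Wt_symmetric:
  assumes "weight_nondegenerate a b v"
  shows "transpose (peval (weight_deriv_poly a b v) t ** Wt a b v t) = peval (weight_deriv_poly a b v) t ** Wt a b v t"
proof -
  have "peval (weight_deriv_poly a b v) t ** Wt a b v t
      = (t powr a * (1 - t) powr b) *\<^sub>R peval (weight_deriv_poly a b v ** weight_poly a b v) t"
    by (simp only: Wt_eq_weight_poly matrix_scaleR_simps peval_mult)
  then show ?thesis
    unfolding weight_deriv_poly_mult[OF assms] by (simp add: vec2x2_eq_iff transpose_def weight_poly_def)
qed

lemma Wt_at_0: "a > 0 \<Longrightarrow> Wt a b v 0 = 0"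
  and Wt_at_1: "b > 0 \<Longrightarrow> Wt a b v 1 = 0"
  by (simp_all add: Wt_eq_weight_poly)

lemma mat_continuous_on_Wt:
  assumes "a > 0" "b > 0"
  shows "mat_continuous_on {0..1} (Wt a b v)"
proof -
  have "continuous_on {0..1} (\<lambda>s::real. s powr a)"
    by (rule continuous_on_powr') (use assms in \<open>auto intro!: continuous_intros\<close>)
  moreover have "continuous_on {0..1} (\<lambda>s::real. (1 - s) powr b)"
    by (rule continuous_on_powr') (use assms in \<open>auto intro!: continuous_intros\<close>)
  ultimately show ?thesis unfolding mat_continuous_on_def Wt_eq_weight_poly
    by (auto intro!: continuous_intros)
qed

lemma det_weight_poly_pos:
  assumes "weight_admissible a b v" "0 < t" "t < 1"
  shows "poly (weight_poly a b v $1$1) t * poly (weight_poly a b v $2$2) t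
           - poly (weight_poly a b v $1$2) t * poly (weight_poly a b v $2$1) t > 0"
proof -
  define K where "K = - (v * v) * (a + b + 2 + v) * (a + b + 2 - v) / ((a + v - b) * (a - v - b))"
  have adm: "a > -1" "b > -1" "\<bar>a - b\<bar> < \<bar>v\<bar>" "\<bar>v\<bar> < a + b + 2"
    using assms(1) by (simp_all add: weight_admissible_def)
  have "poly (weight_poly a b v $1$1 * weight_poly a b v $2$2 - weight_poly a b v $1$2 * weight_poly a b v $2$1) t
      = poly [:0, 0, K, -2 * K, K:] t"
    unfolding K_def using det_weight_poly[OF weight_admissible_nondegenerate[OF assms(1)]] by simp
  then have det: "poly (weight_poly a b v $1$1) t * poly (weight_poly a b v $2$2) t
      - poly (weight_poly a b v $1$2) t * poly (weight_poly a b v $2$1) t = K * (t * (1 - t))\<^sup>2"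
    by (simp add: algebra_simps power2_eq_square)
  have "\<bar>a - b\<bar>\<^sup>2 < \<bar>v\<bar>\<^sup>2" by (rule power_strict_mono[OF adm(3)]) simp_all
  then have "(a + v - b) * (a - v - b) < 0" by (simp add: algebra_simps power2_eq_square)
  moreover have "(v * v) * (a + b + 2 + v) * (a + b + 2 - v) > 0"
  proof -
    have "v \<noteq> 0" "a + b + 2 + v > 0" "a + b + 2 - v > 0"
      using adm(3,4) by (auto simp: abs_less_iff)
    then show ?thesis by (metis mult_pos_pos not_real_square_gt_zero)
  qed
  ultimately have "K > 0" unfolding K_def by (simp add: divide_pos_neg)
  then show ?thesis unfolding det using assms(2,3) by simp
qed

text \<open>Q(1,1) is a + 1 > 0 at 0 and cannot vanish inside (0,1), where det Q > 0.\<close>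

lemma weight_poly_11_pos:
  assumes "weight_admissible a b v" "0 < t" "t < 1"
  shows "poly (weight_poly a b v $1$1) t > 0"
proof (rule ccontr)
  let ?q = "poly (weight_poly a b v $1$1)"
  assume "\<not> ?thesis"
  moreover have "?q 0 > 0" using assms(1) by (simp add: weight_poly_def weight_admissible_def)
  moreover have "continuous_on {0..t} ?q" by (intro continuous_intros)
  ultimately obtain x where x: "0 \<le> x" "x \<le> t" "?q x = 0"
    using IVT2'[of ?q t 0 0] assms(2) by auto
  then have "0 < x" "x < 1" using \<open>?q 0 > 0\<close> assms(3) by (auto simp: order.order_iff_strict)
  from det_weight_poly_pos[OF assms(1) this] x(3) weight_poly_symmetric show False by simp
qed

lemma Wt_invertible:
  assumes "weight_admissible a b v" "0 < t" "t < 1"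
  shows "Wt a b v t ** matrix_inv (Wt a b v t) = mat 1"
proof (rule matrix_inv_2x2)
  define u where "u = t powr a * (1 - t) powr b"
  let ?Q = "weight_poly a b v"
  have "Wt a b v t $1$1 * Wt a b v t $2$2 - Wt a b v t $1$2 * Wt a b v t $2$1 =
     u * u * (poly (?Q $1$1) t * poly (?Q $2$2) t - poly (?Q $1$2) t * poly (?Q $2$1) t)"
    by (simp add: Wt_eq_weight_poly u_def algebra_simps)
  moreover have "u > 0" using assms(2,3) by (simp add: u_def)
  ultimately show "Wt a b v t $1$1 * Wt a b v t $2$2 - Wt a b v t $1$2 * Wt a b v t $2$1 \<noteq> 0"
    using det_weight_poly_pos[OF assms] by simp
qed

lemma Wt_definite:
  assumes adm: "weight_admissible a b v"
    and int: "mat_has_integral (\<lambda>s. peval D s ** Wt a b v s ** transpose (peval D s)) 0 {0..1}"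
    and t: "0 < t" "t < 1"
  shows "peval D t = 0"
proof -
  define u where "u s = s powr a * (1 - s) powr b" for s
  define f where "f s = trace (peval D s ** peval (weight_poly a b v) s ** transpose (peval D s))" for s
  define Y where "Y = D ** weight_poly a b v ** transpose D"
  have W: "Wt a b v s = u s *\<^sub>R peval (weight_poly a b v) s" for s
    by (simp add: Wt_eq_weight_poly u_def)
  have tr: "trace (peval D s ** Wt a b v s ** transpose (peval D s)) = u s * f s" for s
    unfolding W f_def by (simp add: matrix_scaleR_simps trace_def sum_2 algebra_simps)
  have f: "f s \<ge> 0" "f s = 0 \<Longrightarrow> peval D s = 0" if "0 < s" "s < 1" for s
    using trace_congruence_2x2[of "peval (weight_poly a b v) s" "peval D s"]
      weight_poly_11_pos[OF adm that] det_weight_poly_pos[OF adm that] weight_poly_symmetric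
    unfolding f_def by auto
  have "((\<lambda>s. u s * f s) has_integral 0) {0..1}"
    using mat_has_integral_trace[OF int] unfolding tr by (simp add: trace_def)
  moreover have "0 \<le> u s * f s" if "s \<in> {0..1}" for s
  proof (cases "s = 0 \<or> s = 1")
    case False then show ?thesis using that f(1) by (auto simp: u_def)
  qed (auto simp: u_def)
  moreover have "continuous_on {0<..<1} (\<lambda>s. u s * f s)"
  proof -
    have "f s = poly (Y$1$1 + Y$2$2) s" for s
      unfolding f_def Y_def peval_mult peval_transpose trace_peval[symmetric] ..
    then show ?thesis unfolding u_def by (auto intro!: continuous_intros)
  qed
  ultimately have "u t * f t = 0" using has_integral_0_nonneg_imp_0 t by blast
  moreover have "u t > 0" using t by (simp add: u_def)
  ultimately show ?thesis using f(2)[OF t] by simp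
qed

section \<open>The weights W^(k) of a fixed admissible family\<close>

locale jacobi_weight =
  fixes \<alpha> \<beta> v :: real
  assumes admissible: "weight_admissible \<alpha> \<beta> v"
begin

definition W :: "nat \<Rightarrow> real \<Rightarrow> mat2" where
  "W j = Wt (\<alpha> + real j) (\<beta> + real j) v"

definition E :: "nat \<Rightarrow> pmat" where
  "E j = weight_shift_poly (\<alpha> + real j) (\<beta> + real j) v"

definition G :: "nat \<Rightarrow> pmat" where
  "G j = weight_deriv_poly (\<alpha> + real j) (\<beta> + real j) v"

text \<open>lower j X is characterised by (X W(j+1))' = (lower j X) W(j).\<close>

definition lower :: "nat \<Rightarrow> pmat \<Rightarrow> pmat" where
  "lower j X = pmat_pderiv X ** E j + X ** G j"

fun lower_pow :: "nat \<Rightarrow> nat \<Rightarrow> pmat \<Rightarrow> pmat" where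
  "lower_pow j 0 X = X"
| "lower_pow j (Suc m) X = lower j (lower_pow (Suc j) m X)"

definition lead_const :: "nat \<Rightarrow> nat \<Rightarrow> mat2" where
  "lead_const k n = ((-1) ^ n * pochhammer (\<alpha> + \<beta> + 3 + 2 * real k + real n) n) *\<^sub>R
        mat2 (((\<alpha> + v + \<beta>) + 2 * (real k + 1 + real n)) / ((\<alpha> + v + \<beta>) + 2 * (real k + 1))) 0
             0 (((\<alpha> - v + \<beta>) + 2 * (real k + 1 + real n)) / ((\<alpha> - v + \<beta>) + 2 * (real k + 1)))"

lemma admissible_level: "weight_admissible (\<alpha> + real j) (\<beta> + real j) v"
  using weight_admissible_shift[OF admissible] by simp

lemma nondegenerate_level: "weight_nondegenerate (\<alpha> + real j) (\<beta> + real j) v"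
  by (rule weight_admissible_nondegenerate[OF admissible_level])

lemma level_Suc: "\<alpha> + real (Suc j) = (\<alpha> + real j) + 1" "\<beta> + real (Suc j) = (\<beta> + real j) + 1"
  by simp_all

lemma W_Suc: "0 < t \<Longrightarrow> t < 1 \<Longrightarrow> W (Suc j) t = peval (E j) t ** W j t"
  unfolding W_def E_def level_Suc by (rule Wt_Suc[OF nondegenerate_level])

lemma W_Suc_has_derivative:
  "0 < t \<Longrightarrow> t < 1 \<Longrightarrow> mat_has_derivative (W (Suc j)) (peval (G j) t ** W j t) t"
  unfolding W_def G_def level_Suc by (rule Wt_Suc_has_derivative[OF nondegenerate_level])

lemma W_transpose: "transpose (W j t) = W j t"
  unfolding W_def by (rule Wt_transpose)

lemma lower_has_derivative:
  assumes "0 < t" "t < 1"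
  shows "mat_has_derivative (\<lambda>s. peval X s ** W (Suc j) s) (peval (lower j X) t ** W j t) t"
proof -
  have "mat_has_derivative (\<lambda>s. peval X s ** W (Suc j) s)
      (peval (pmat_pderiv X) t ** W (Suc j) t + peval X t ** (peval (G j) t ** W j t)) t"
    by (intro mat_has_derivative_mult mat_has_derivative_peval W_Suc_has_derivative assms)
  then show ?thesis
    unfolding W_Suc[OF assms] lower_def peval_add peval_mult
    by (simp add: matrix_add_rdistrib matrix_mul_assoc)
qed

lemma W_Suc_transpose_mult:
  assumes "0 < t" "t < 1"
  shows "W j t ** transpose (peval (lower j X) t) =
           W (Suc j) t ** transpose (peval (pmat_pderiv X) t) + peval (G j) t ** W j t ** transpose (peval X t)"
proof -
  have "W j t ** transpose (peval (E j) t) = transpose (peval (E j) t ** W j t)"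
    by (simp only: matrix_transpose_mul W_transpose)
  also have "\<dots> = W (Suc j) t"
    by (simp only: W_Suc[OF assms, symmetric] W_transpose)
  finally have E: "W j t ** transpose (peval (E j) t) = W (Suc j) t" .
  have "W j t ** transpose (peval (G j) t) = transpose (peval (G j) t ** W j t)"
    by (simp only: matrix_transpose_mul W_transpose)
  also have "\<dots> = peval (G j) t ** W j t"
    unfolding W_def G_def by (rule weight_deriv_poly_Wt_symmetric[OF nondegenerate_level])
  finally have G: "W j t ** transpose (peval (G j) t) = peval (G j) t ** W j t" .
  show ?thesis
    unfolding lower_def peval_add peval_mult transpose_add matrix_transpose_mul matrix_add_ldistrib
    by (simp add: matrix_mul_assoc E G)
qed

lemma pairing_has_derivative:
  assumes "0 < t" "t < 1"
  shows "mat_has_derivative (\<lambda>s. peval Y s ** W (Suc j) s ** transpose (peval X s))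
    (peval (pmat_pderiv Y) t ** W (Suc j) t ** transpose (peval X t)
       + peval Y t ** W j t ** transpose (peval (lower j X) t)) t"
proof -
  have "mat_has_derivative (\<lambda>s. peval Y s ** W (Suc j) s ** transpose (peval X s))
      ((peval (pmat_pderiv Y) t ** W (Suc j) t + peval Y t ** (peval (G j) t ** W j t)) ** transpose (peval X t)
         + peval Y t ** W (Suc j) t ** transpose (peval (pmat_pderiv X) t)) t"
    by (intro mat_has_derivative_mult mat_has_derivative_peval W_Suc_has_derivative
        mat_has_derivative_transpose assms)
  moreover have "peval Y t ** W j t ** transpose (peval (lower j X) t)
      = peval Y t ** (W j t ** transpose (peval (lower j X) t))"
    by (simp only: matrix_mul_assoc)
  ultimately show ?thesis
    unfolding W_Suc_transpose_mult[OF assms]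
    by (simp only: matrix_add_ldistrib matrix_add_rdistrib matrix_mul_assoc add_ac)
qed

text \<open>The boundary terms vanish because W (Suc j) vanishes at 0 and 1.\<close>

lemma integration_by_parts:
  "mat_has_integral (\<lambda>s. peval (pmat_pderiv Y) s ** W (Suc j) s ** transpose (peval X s)) I {0..1}
   \<longleftrightarrow> mat_has_integral (\<lambda>s. peval Y s ** W j s ** transpose (peval (lower j X) s)) (- I) {0..1}"
proof -
  define F where "F s = peval Y s ** W (Suc j) s ** transpose (peval X s)" for s
  define A where "A s = peval (pmat_pderiv Y) s ** W (Suc j) s ** transpose (peval X s)" for s
  define B where "B s = peval Y s ** W j s ** transpose (peval (lower j X) s)" for s
  have pos: "\<alpha> + real (Suc j) > 0" "\<beta> + real (Suc j) > 0"
    using admissible by (auto simp: weight_admissible_def)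
  have cont_W: "mat_continuous_on {0..1} (W (Suc j))"
    unfolding W_def using pos by (rule mat_continuous_on_Wt)
  have cont_A: "mat_continuous_on {0..1} A"
    unfolding A_def by (intro mat_continuous_on_mult mat_continuous_on_peval cont_W mat_continuous_on_transpose)
  have "mat_continuous_on {0..1} F"
    unfolding F_def by (intro mat_continuous_on_mult mat_continuous_on_peval cont_W mat_continuous_on_transpose)
  moreover have "mat_has_derivative F (A t + B t) t" if "0 < t" "t < 1" for t
    unfolding F_def A_def B_def by (rule pairing_has_derivative[OF that])
  moreover have "F 0 = 0" "F 1 = 0"
    unfolding F_def W_def using pos by (simp_all add: Wt_at_0 Wt_at_1)
  ultimately have AB: "mat_has_integral (\<lambda>s. A s + B s) 0 {0..1}"
    using mat_has_integral_derivative[of F "\<lambda>t. A t + B t"] by simp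
  define I0 where "I0 = (\<chi> i l. integral {0..1} (\<lambda>s. A s $ i $ l))"
  have A: "mat_has_integral A I0 {0..1}"
    using cont_A unfolding I0_def mat_continuous_on_def mat_has_integral_def
    by (auto intro!: integrable_integral integrable_continuous_real)
  from mat_has_integral_diff[OF AB A] have B: "mat_has_integral B (- I0) {0..1}"
    by (rule mat_has_integral_cong) auto
  show ?thesis
    unfolding A_def[symmetric] B_def[symmetric]
  proof
    assume "mat_has_integral A I {0..1}"
    with A have "I0 = I" by (rule mat_has_integral_unique)
    with B show "mat_has_integral B (- I) {0..1}" by blast
  next
    assume "mat_has_integral B (- I) {0..1}"
    with B have "- I0 = - I" by (rule mat_has_integral_unique)
    with A show "mat_has_integral A I {0..1}" by simp
  qed
qed

lemma rodrigues_formula: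
  assumes "0 < t" "t < 1" "m \<le> N"
  shows "(deriv ^^ m) (\<lambda>s. W N s $ i $ j) t = (peval (lower_pow (N - m) m (mat 1)) t ** W (N - m) t) $ i $ j"
  using assms
proof (induction m arbitrary: t)
  case 0 then show ?case by simp
next
  case (Suc m)
  define l where "l = N - Suc m"
  have l: "N - m = Suc l" using Suc.prems by (simp add: l_def)
  have IH: "(deriv ^^ m) (\<lambda>s. W N s $ i $ j) s = (peval (lower_pow (Suc l) m (mat 1)) s ** W (Suc l) s) $ i $ j"
    if "s \<in> {0<..<1}" for s
    using Suc that l by simp
  have "((\<lambda>s. (peval (lower_pow (Suc l) m (mat 1)) s ** W (Suc l) s) $ i $ j) has_real_derivative
      (peval (lower l (lower_pow (Suc l) m (mat 1))) t ** W l t) $ i $ j) (at t)"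
    using lower_has_derivative[OF Suc.prems(1,2)] unfolding mat_has_derivative_def by blast
  then have "((deriv ^^ m) (\<lambda>s. W N s $ i $ j) has_real_derivative
      (peval (lower l (lower_pow (Suc l) m (mat 1))) t ** W l t) $ i $ j) (at t)"
    by (rule has_field_derivative_transform_within_open[of _ _ _ "{0<..<1}"]) (use Suc.prems IH in auto)
  then show ?case by (simp add: DERIV_imp_deriv l_def)
qed

lemma mderiv_Wt_rodrigues:
  assumes "0 < t" "t < 1"
  shows "mderiv n (Wt (\<alpha> + real (k + n)) (\<beta> + real (k + n)) v) t = peval (lower_pow k n (mat 1)) t ** W k t"
  using rodrigues_formula[OF assms, of n "k + n"] unfolding mderiv_def W_def by (simp add: vec_eq_iff)

lemma level_pos:
  "(\<alpha> + v + \<beta>) + 2 * (real j + 1) > 0" "(\<alpha> - v + \<beta>) + 2 * (real j + 1) > 0"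
  using admissible by (auto simp: weight_admissible_def abs_if split: if_splits)

lemma lower_degree_less: "pmat_degree_less X (Suc m) \<Longrightarrow> pmat_degree_less (lower j X) (Suc (Suc m))"
  unfolding lower_def E_def G_def by (rule weight_lowering_degree_less)

lemma lower_coeff:
  "pmat_degree_less X (Suc m) \<Longrightarrow>
     pmat_coeff (lower j X) (Suc m) = pmat_coeff X m ** lowering_lead (\<alpha> + real j) (\<beta> + real j) v m"
  unfolding lower_def E_def G_def by (rule weight_lowering_coeff[OF nondegenerate_level])

lemma lower_pow_degree_less: "pmat_degree_less X (Suc m) \<Longrightarrow> pmat_degree_less (lower_pow j d X) (Suc m + d)"
  by (induction d arbitrary: j) (simp_all add: lower_degree_less)

lemma lead_const_Suc:
  "lead_const j (Suc m) = lead_const (Suc j) m ** lowering_lead (\<alpha> + real j) (\<beta> + real j) v m"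
proof -
  define kp where "kp i = (\<alpha> + v + \<beta>) + 2 * (real i + 1)" for i
  define km where "km i = (\<alpha> - v + \<beta>) + 2 * (real i + 1)" for i
  define c where "c i n = (-1) ^ n * pochhammer (\<alpha> + \<beta> + 3 + 2 * real i + real n) n" for i n
  have lead: "lead_const i n = c i n *\<^sub>R mat2 (kp (i + n) / kp i) 0 0 (km (i + n) / km i)" for i n
    unfolding lead_const_def c_def kp_def km_def by (simp add: algebra_simps)
  have lowering: "lowering_lead (\<alpha> + real j) (\<beta> + real j) v m
      = mat2 (- (\<alpha> + \<beta> + 2 * real j + real m + 4) * (kp (Suc j) / kp j)) 0
             0 (- (\<alpha> + \<beta> + 2 * real j + real m + 4) * (km (Suc j) / km j))"
    unfolding lowering_lead_def kp_def km_def by (simp add: algebra_simps)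
  have c: "c j (Suc m) = - (\<alpha> + \<beta> + 2 * real j + real m + 4) * c (Suc j) m"
    unfolding c_def pochhammer_rec by (simp add: algebra_simps)
  have "kp j \<noteq> 0" "km j \<noteq> 0" "kp (Suc j) \<noteq> 0" "km (Suc j) \<noteq> 0"
    using level_pos[of j] level_pos[of "Suc j"] by (simp_all add: kp_def km_def)
  then show ?thesis unfolding lead lowering c by (simp add: vec2x2_eq_iff field_simps)
qed

lemma lower_pow_lead_coeff:
  "pmat_degree_less (lower_pow j m (mat 1)) (Suc m) \<and> pmat_coeff (lower_pow j m (mat 1)) m = lead_const j m"
proof (induction m arbitrary: j)
  case 0
  have "lead_const j 0 = mat 1" using level_pos[of j] by (simp add: lead_const_def vec2x2_eq_iff mat_def)
  then show ?case using pmat_degree_less_one pmat_coeff_one by simp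
next
  case (Suc m)
  then show ?case using lower_degree_less lower_coeff lead_const_Suc by simp
qed

lemma lead_const_invertible: "matrix_inv (lead_const k n) ** lead_const k n = mat 1"
proof (rule matrix_inv_2x2)
  have "pochhammer (\<alpha> + \<beta> + 3 + 2 * real k + real n) n > 0"
    using admissible by (intro pochhammer_pos) (simp add: weight_admissible_def)
  moreover have "(\<alpha> + v + \<beta>) + 2 * (real k + 1 + real n) > 0" "(\<alpha> - v + \<beta>) + 2 * (real k + 1 + real n) > 0"
    using level_pos[of "k + n"] by (simp_all add: algebra_simps)
  ultimately show "lead_const k n $1$1 * lead_const k n $2$2 - lead_const k n $1$2 * lead_const k n $2$1 \<noteq> 0"
    using level_pos[of k] by (simp add: lead_const_def)
qed

context
  fixes C :: "nat \<Rightarrow> nat \<Rightarrow> mat2"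
  assumes monic_orth: "monic_orth (Wt \<alpha> \<beta> v) C"
begin

lemma orthogonal_degree_less:
  "M \<le> N \<Longrightarrow> pmat_degree_less Z M \<Longrightarrow>
     mat_has_integral (\<lambda>t. peval (pmat_of_mpoly C N) t ** W 0 t ** transpose (peval Z t)) 0 {0..1}"
proof (induction M arbitrary: Z)
  case 0
  then show ?case by (intro mat_has_integral_zero) (simp add: pmat_degree_less_0_iff)
next
  case (Suc M)
  let ?P = "\<lambda>N t. peval (pmat_of_mpoly C N) t"
  define L where "L = pmat_coeff Z M"
  define Z' where "Z' = Z - pmat_const L ** pmat_of_mpoly C M"
  have "pmat_degree_less Z' M"
    unfolding Z'_def L_def using Suc.prems(2) monic_orth
    by (intro pmat_degree_less_Suc_diff pmat_degree_less_const_mult pmat_degree_less_of_mpoly)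
       (simp_all add: pmat_coeff_const_mult pmat_coeff_of_mpoly monic_orth_def)
  then have IH: "mat_has_integral (\<lambda>t. ?P N t ** W 0 t ** transpose (peval Z' t)) 0 {0..1}"
    using Suc by simp
  have "N \<noteq> M" using Suc.prems by simp
  then have "mat_has_integral (\<lambda>t. ?P N t ** W 0 t ** transpose (?P M t)) 0 {0..1}"
    using monic_orth by (simp add: monic_orth_def mat_has_integral_of_has_integral peval_pmat_of_mpoly W_def)
  from mat_has_integral_add[OF IH mat_has_integral_mult_right[OF this, of "transpose L"]] show ?case
  proof (rule mat_has_integral_cong)
    fix t
    have "Z = Z' + pmat_const L ** pmat_of_mpoly C M" by (simp add: Z'_def)
    then have "peval Z t = peval Z' t + L ** ?P M t" by (simp only: peval_add peval_mult peval_const)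
    then show "?P N t ** W 0 t ** transpose (peval Z' t) + ?P N t ** W 0 t ** transpose (?P M t) ** transpose L
        = ?P N t ** W 0 t ** transpose (peval Z t)"
      by (simp only: transpose_add matrix_transpose_mul matrix_add_ldistrib matrix_mul_assoc)
  qed simp
qed

text \<open>Each integration by parts moves one derivative from P(N) onto the other factor.\<close>

lemma derivative_orthogonal_lower_pow:
  assumes "pmat_degree_less D (Suc m)" "i \<le> k"
  shows "mat_has_integral (\<lambda>t. peval ((pmat_pderiv ^^ i) (pmat_of_mpoly C (Suc m + k))) t ** W i t
            ** transpose (peval (lower_pow i (k - i) D) t)) 0 {0..1}"
  using assms(2)
proof (induction i)
  case 0
  show ?case using orthogonal_degree_less[OF order.refl lower_pow_degree_less[OF assms(1)]] by simp
next
  case (Suc i)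
  have "k - i = Suc (k - Suc i)" using Suc.prems by simp
  then have "mat_has_integral (\<lambda>t. peval ((pmat_pderiv ^^ i) (pmat_of_mpoly C (Suc m + k))) t ** W i t
      ** transpose (peval (lower i (lower_pow (Suc i) (k - Suc i) D)) t)) 0 {0..1}"
    using Suc by simp
  then show ?case
    using integration_by_parts[of "(pmat_pderiv ^^ i) (pmat_of_mpoly C (Suc m + k))" i
        "lower_pow (Suc i) (k - Suc i) D" 0]
    by simp
qed

lemma higher_derivative_orthogonal:
  assumes "pmat_degree_less D n" "n \<ge> 1"
  shows "mat_has_integral (\<lambda>s. peval ((pmat_pderiv ^^ k) (pmat_of_mpoly C (n + k))) s ** W k s
           ** transpose (peval D s)) 0 {0..1}"
proof -
  obtain m where m: "n = Suc m" using assms(2) by (cases n) auto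
  show ?thesis
    using derivative_orthogonal_lower_pow[OF assms(1)[unfolded m] order.refl] unfolding m by simp
qed

end

lemma lower_pow_orthogonal_degree_less:
  assumes "pmat_degree_less D n" "d \<le> n"
  shows "mat_has_integral (\<lambda>t. peval ((pmat_pderiv ^^ (n - d)) D) t ** W (k + (n - d)) t
           ** transpose (peval (lower_pow (k + (n - d)) d (mat 1)) t)) 0 {0..1}"
  using assms(2)
proof (induction d)
  case 0
  then show ?case using higher_pmat_pderiv_degree_less[OF assms(1)] by (intro mat_has_integral_zero) simp
next
  case (Suc d)
  have "n - d = Suc (n - Suc d)" using Suc.prems by simp
  then have "mat_has_integral (\<lambda>t. peval (pmat_pderiv ((pmat_pderiv ^^ (n - Suc d)) D)) t
      ** W (Suc (k + (n - Suc d))) t ** transpose (peval (lower_pow (Suc (k + (n - Suc d))) d (mat 1)) t)) 0 {0..1}"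
    using Suc by simp
  then show ?case
    using integration_by_parts[of "(pmat_pderiv ^^ (n - Suc d)) D" "k + (n - Suc d)"
        "lower_pow (Suc (k + (n - Suc d))) d (mat 1)" 0]
    by simp
qed

lemma rodrigues_orthogonal:
  assumes "pmat_degree_less D n"
  shows "mat_has_integral (\<lambda>s. peval D s ** W k s ** transpose (peval (lower_pow k n (mat 1)) s)) 0 {0..1}"
  using lower_pow_orthogonal_degree_less[OF assms order.refl, of k] by simp

lemma mderiv_mpoly: "mderiv k (mpoly C N) t = peval ((pmat_pderiv ^^ k) (pmat_of_mpoly C N)) t"
proof -
  have "(\<lambda>s. mpoly C N s $ i $ j) = poly (pmat_of_mpoly C N $ i $ j)" for i j
    by (rule ext) (simp flip: peval_pmat_of_mpoly)
  moreover have "(deriv ^^ k) (poly p) = poly ((pderiv ^^ k) p)" for p :: "real poly"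
  proof -
    have "deriv (poly q) = poly (pderiv q)" for q :: "real poly"
      by (rule ext) (rule DERIV_imp_deriv[OF poly_DERIV])
    then show ?thesis by (induction k) simp_all
  qed
  ultimately show ?thesis unfolding mderiv_def by (simp add: vec_eq_iff higher_pmat_pderiv_nth)
qed

lemma scaled_derivative_lead_coeff:
  assumes "C (n + k) (n + k) = mat 1"
  defines "P \<equiv> pmat_smult [:fact n / fact (n + k):] ((pmat_pderiv ^^ k) (pmat_of_mpoly C (n + k)))"
  shows "pmat_degree_less P (Suc n)" "pmat_coeff P n = mat 1"
proof -
  have coeff_P: "coeff (P $ i $ j) l = fact n / fact (n + k) * (fact (l + k) / fact l)
      * (if l \<le> n then C (n + k) (l + k) $ i $ j else 0)" for i j l
    by (simp add: P_def higher_pmat_pderiv_nth coeff_higher_pderiv_fact coeff_pmat_of_mpoly)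
  show "pmat_degree_less P (Suc n)" by (simp add: pmat_degree_less_def degree_less_def coeff_P)
  show "pmat_coeff P n = mat 1" using assms(1) by (simp add: vec_eq_iff coeff_P add.commute)
qed

theorem derivative_eq_rodrigues:
  assumes "monic_orth (Wt \<alpha> \<beta> v) C" "n \<ge> 1" "0 < t" "t < 1"
  shows "(fact n / fact (n + k)) *\<^sub>R mderiv k (mpoly C (n + k)) t
           = matrix_inv (lead_const k n) ** peval (lower_pow k n (mat 1)) t"
proof -
  define P where "P = pmat_smult [:fact n / fact (n + k):] ((pmat_pderiv ^^ k) (pmat_of_mpoly C (n + k)))"
  define R where "R = pmat_const (matrix_inv (lead_const k n)) ** lower_pow k n (mat 1)"
  define D where "D = P - R"
  have "C (n + k) (n + k) = mat 1" using assms(1) by (simp add: monic_orth_def)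
  note P = scaled_derivative_lead_coeff[of C n k, OF this, folded P_def]
  have "pmat_degree_less R (Suc n)"
    unfolding R_def using lower_pow_lead_coeff[of k n] by (intro pmat_degree_less_const_mult) simp
  moreover have "pmat_coeff R n = mat 1"
    unfolding R_def pmat_coeff_const_mult using lower_pow_lead_coeff[of k n] lead_const_invertible[of k n]
    by simp
  ultimately have D: "pmat_degree_less D n"
    unfolding D_def using P by (intro pmat_degree_less_Suc_diff) simp_all
  from mat_has_integral_scaleR[OF higher_derivative_orthogonal[OF assms(1) D assms(2)], of "fact n / fact (n + k)"]
  have "mat_has_integral (\<lambda>s. peval P s ** W k s ** transpose (peval D s)) 0 {0..1}"
    by (rule mat_has_integral_cong) (simp_all add: P_def peval_smult matrix_scaleR_simps)
  moreover
  from mat_has_integral_mult_left[OF mat_has_integral_transpose[OF rodrigues_orthogonal[OF D]],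
      of "matrix_inv (lead_const k n)"]
  have "mat_has_integral (\<lambda>s. peval R s ** W k s ** transpose (peval D s)) 0 {0..1}"
    by (rule mat_has_integral_cong)
       (simp_all only: R_def peval_mult peval_const matrix_transpose_mul transpose_transpose W_transpose
         matrix_mul_assoc transpose_zero times0_right)
  ultimately have "mat_has_integral (\<lambda>s. peval P s ** W k s ** transpose (peval D s)
      - peval R s ** W k s ** transpose (peval D s)) (0 - 0) {0..1}"
    by (rule mat_has_integral_diff)
  then have "mat_has_integral (\<lambda>s. peval D s ** Wt (\<alpha> + real k) (\<beta> + real k) v s ** transpose (peval D s)) 0 {0..1}"
    by (rule mat_has_integral_cong) (simp_all add: D_def W_def peval_diff matrix_diff_rdistrib)
  then have "peval D t = 0" by (rule Wt_definite[OF admissible_level _ assms(3,4)])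
  then show ?thesis
    by (simp add: D_def P_def R_def peval_diff peval_smult peval_mult mderiv_mpoly)
qed

end

theorem proposition6p3:
  fixes \<alpha> \<beta> v :: real and C :: "nat \<Rightarrow> nat \<Rightarrow> mat2" and k n :: nat
  assumes "\<alpha> > -1" and "\<beta> > -1"
    and "\<bar>\<alpha> - \<beta>\<bar> < \<bar>v\<bar>" and "\<bar>v\<bar> < \<alpha> + \<beta> + 2"
    and "monic_orth (Wt \<alpha> \<beta> v) C"
    and "n \<ge> 1"
    and "t \<in> {0<..<1}"
  shows "(fact (n + k - k) / fact (n + k)) *\<^sub>R mderiv k (mpoly C (n + k)) t =
    matrix_inv (((-1) ^ n * pochhammer (\<alpha> + \<beta> + 3 + 2 * real k + real n) n) *\<^sub>R
        mat2 (((\<alpha> + v + \<beta>) + 2 * (real k + 1 + real n)) / ((\<alpha> + v + \<beta>) + 2 * (real k + 1))) 0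
             0 (((\<alpha> - v + \<beta>) + 2 * (real k + 1 + real n)) / ((\<alpha> - v + \<beta>) + 2 * (real k + 1))))
    ** mderiv n (Wt (\<alpha> + real (k + n)) (\<beta> + real (k + n)) v) t
    ** matrix_inv (Wt (\<alpha> + real k) (\<beta> + real k) v t)"
proof -
  interpret jacobi_weight \<alpha> \<beta> v
    using assms(1-4) by unfold_locales (simp add: weight_admissible_def)
  have t: "0 < t" "t < 1" using assms(7) by auto
  have W_inv: "W k t ** matrix_inv (W k t) = mat 1"
    unfolding W_def by (rule Wt_invertible[OF admissible_level t])
  have "(fact (n + k - k) / fact (n + k)) *\<^sub>R mderiv k (mpoly C (n + k)) t
      = matrix_inv (lead_const k n) ** peval (lower_pow k n (mat 1)) t"
    using derivative_eq_rodrigues[OF assms(5,6) t] by simp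
  also have "\<dots> = matrix_inv (lead_const k n) ** mderiv n (Wt (\<alpha> + real (k + n)) (\<beta> + real (k + n)) v) t
      ** matrix_inv (W k t)"
    unfolding mderiv_Wt_rodrigues[OF t] by (simp only: matrix_mul_assoc[symmetric] W_inv matrix_mul_rid)
  finally show ?thesis unfolding lead_const_def W_def .
qed

end
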